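(* For every activity-breaking channel $\mathcal P$ on $S$, the inclusion $\mathcal P(\mathsf P(S))\subseteq\mathsf P(S)$ is strict; that is, there is no activity-breaking channel with $\mathcal P(\mathsf P(S))=\mathsf P(S)$. In particular no activity-breaking channel satisfies $\mathcal P(\tau)=\tau$ for all $\tau\in\mathsf P(S)$.
   Context: $S$ is a $d$-dimensional quantum system ($d\ge2$) with non-degenerate Hamiltonian $H=\sum_i E_i|i\rangle\langle i|$, $E_1<\dots<E_d$. $\mathsf{St}(S)$ is the set of density matrices; $\mathsf P(S)$ is the set of passive states, i.e. states $\sum_ip_i|i\rangle\langle i|$ with $p_1\ge\dots\ge p_d$. A quantum channel $\mathcal P$ is activity breaking if $\mathcal P(\rho)\in\mathsf P(S)$ for every $\rho\in\mathsf{St}(S)$. *)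

theory Defs
  imports "Jordan_Normal_Form.Schur_Decomposition"
begin

definition msum :: "nat \<Rightarrow> complex mat list \<Rightarrow> complex mat" where
  "msum d Ms = foldr (+) Ms (0\<^sub>m d d)"

definition mtrace :: "complex mat \<Rightarrow> complex" where
  "mtrace A = (\<Sum>i<dim_row A. A $$ (i, i))"

definition psd :: "nat \<Rightarrow> complex mat \<Rightarrow> bool" where
  "psd d A \<longleftrightarrow> A \<in> carrier_mat d d \<and>
     (\<forall>v \<in> carrier_vec d. Im (conjugate v \<bullet> (A *\<^sub>v v)) = 0 \<and> Re (conjugate v \<bullet> (A *\<^sub>v v)) \<ge> 0)"

definition states :: "nat \<Rightarrow> complex mat set" where
  "states d = {\<rho>. psd d \<rho> \<and> mtrace \<rho> = 1}"

(* P(S): passive states; the energy eigenbasis |1>,...,|d> (E_1 < ... < E_d)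
   is identified with the standard basis e_0,...,e_{d-1}. *)
definition passive_states :: "nat \<Rightarrow> complex mat set" where
  "passive_states d = {\<rho> \<in> states d. \<exists>p :: nat \<Rightarrow> real.
      (\<forall>i j. i \<le> j \<longrightarrow> j < d \<longrightarrow> p j \<le> p i) \<and>
      \<rho> = mat_diag d (\<lambda>i. complex_of_real (p i))}"

definition quantum_channel :: "nat \<Rightarrow> (complex mat \<Rightarrow> complex mat) \<Rightarrow> bool" where
  "quantum_channel d \<Phi> \<longleftrightarrow> (\<exists>Ks :: complex mat list.
      (\<forall>K \<in> set Ks. K \<in> carrier_mat d d) \<and>
      msum d (map (\<lambda>K. mat_adjoint K * K) Ks) = 1\<^sub>m d \<and>
      (\<forall>\<rho> \<in> carrier_mat d d. \<Phi> \<rho> = msum d (map (\<lambda>K. K * \<rho> * mat_adjoint K) Ks)))"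

definition activity_breaking :: "nat \<Rightarrow> (complex mat \<Rightarrow> complex mat) \<Rightarrow> bool" where
  "activity_breaking d \<Phi> \<longleftrightarrow> quantum_channel d \<Phi> \<and> (\<forall>\<rho> \<in> states d. \<Phi> \<rho> \<in> passive_states d)"

end

theory Submission imports Defs begin

text \<open>
  On diagonal states an activity-breaking channel acts through a stochastic matrix W whose
  columns (the images of the energy eigenstates) are themselves passive distributions.
  If every passive state were reached, the ground state would be the image of a passive p;
  since p 0 > 0 and W 0 a \<le> 1, this forces W 0 0 = 1, so W (d-1) 0 = 0. The maximally mixed
  state would be the image of a passive p' as well; but the last entry of a passive
  distribution is at most 1/d, and the column a = 0, which p' weights positively,
  falls strictly short of it.
\<close>

definition prob_vector :: "nat \<Rightarrow> (nat \<Rightarrow> real) \<Rightarrow> bool" where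
  "prob_vector d p \<longleftrightarrow> (\<forall>i<d. 0 \<le> p i) \<and> (\<Sum>i<d. p i) = 1"

definition passive_prob_vector :: "nat \<Rightarrow> (nat \<Rightarrow> real) \<Rightarrow> bool" where
  "passive_prob_vector d p \<longleftrightarrow> prob_vector d p \<and> (\<forall>i j. i \<le> j \<longrightarrow> j < d \<longrightarrow> p j \<le> p i)"

lemma passive_prob_vector_cong:
  assumes "\<forall>i<d. f i = g i"
  shows "passive_prob_vector d f \<longleftrightarrow> passive_prob_vector d g"
proof -
  have "(\<Sum>i<d. f i) = (\<Sum>i<d. g i)" using assms by (intro sum.cong) auto
  then show ?thesis using assms unfolding passive_prob_vector_def prob_vector_def
    by (metis le_less_trans)
qed

lemma prob_vector_le_1:
  assumes "prob_vector d p" and "i < d"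
  shows "p i \<le> 1"
proof -
  have "p i \<le> (\<Sum>k<d. p k)" using assms by (intro member_le_sum) (auto simp: prob_vector_def)
  then show ?thesis using assms(1) by (simp add: prob_vector_def)
qed

lemma passive_prob_vector_first_pos:
  assumes "0 < d" and "passive_prob_vector d p"
  shows "0 < p 0"
proof -
  have "1 = (\<Sum>i<d. p i)" using assms(2) by (simp add: passive_prob_vector_def prob_vector_def)
  also have "\<dots> \<le> (\<Sum>i<d. p 0)" using assms(2) by (intro sum_mono) (auto simp: passive_prob_vector_def)
  also have "\<dots> = real d * p 0" by simp
  finally show ?thesis using mult_nonneg_nonpos[of "real d" "p 0"] by linarith
qed

lemma passive_prob_vector_last_le:
  assumes "passive_prob_vector d p"
  shows "real d * p (d - 1) \<le> 1"
proof -
  have "real d * p (d - 1) = (\<Sum>i<d. p (d - 1))" by simp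
  also have "\<dots> \<le> (\<Sum>i<d. p i)" using assms by (intro sum_mono) (auto simp: passive_prob_vector_def)
  also have "\<dots> = 1" using assms by (simp add: passive_prob_vector_def prob_vector_def)
  finally show ?thesis .
qed

lemma convex_comb_eq_bound_imp_eq:
  assumes p: "prob_vector d p" and bound: "\<forall>a<d. x a \<le> M" and comb: "(\<Sum>a<d. p a * x a) = M"
    and "a < d" and "0 < p a"
  shows "x a = M"
proof -
  have "(\<Sum>b<d. p b * (M - x b)) = (\<Sum>b<d. p b) * M - (\<Sum>b<d. p b * x b)"
    by (simp add: algebra_simps sum_subtractf sum_distrib_left)
  also have "\<dots> = 0" using p comb by (simp add: prob_vector_def)
  finally have "\<forall>b\<in>{..<d}. p b * (M - x b) = 0"
    using p bound by (subst sum_nonneg_eq_0_iff[symmetric]) (auto simp: prob_vector_def)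
  then show ?thesis using \<open>a < d\<close> \<open>0 < p a\<close> by force
qed

lemma passive_columns_ground_state_preimage:
  fixes W :: "nat \<Rightarrow> nat \<Rightarrow> real"
  assumes "2 \<le> d" and columns: "\<forall>a<d. passive_prob_vector d (\<lambda>j. W j a)"
    and p: "passive_prob_vector d p" and ground: "(\<Sum>a<d. W 0 a * p a) = 1"
  shows "W (d - 1) 0 = 0"
proof -
  have d: "0 < d" "0 < d - 1" "d - 1 < d" using assms(1) by auto
  have column0: "prob_vector d (\<lambda>j. W j 0)" using columns d by (simp add: passive_prob_vector_def)
  have "W 0 0 = 1"
  proof (rule convex_comb_eq_bound_imp_eq[where x = "\<lambda>a. W 0 a"])
    show "prob_vector d p" using p by (simp add: passive_prob_vector_def)
    show "\<forall>a<d. W 0 a \<le> 1"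
    proof (intro allI impI)
      fix a assume "a < d"
      then have "prob_vector d (\<lambda>j. W j a)" using columns by (simp add: passive_prob_vector_def)
      from prob_vector_le_1[OF this d(1)] show "W 0 a \<le> 1" by simp
    qed
    show "(\<Sum>a<d. p a * W 0 a) = 1" using ground by (simp add: mult.commute)
  qed (use d(1) passive_prob_vector_first_pos[OF d(1) p] in auto)
  moreover have "W 0 0 + W (d - 1) 0 \<le> (\<Sum>j<d. W j 0)"
    using column0 d sum_mono2[of "{..<d}" "{0, d - 1}" "\<lambda>j. W j 0"]
    by (simp add: prob_vector_def)
  moreover have "0 \<le> W (d - 1) 0" using column0 d(3) by (simp add: prob_vector_def)
  ultimately show ?thesis using column0 by (simp add: prob_vector_def)
qed

lemma passive_columns_uniform_preimage:
  fixes W :: "nat \<Rightarrow> nat \<Rightarrow> real"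
  assumes "0 < d" and columns: "\<forall>a<d. passive_prob_vector d (\<lambda>j. W j a)"
    and p: "passive_prob_vector d p" and uniform: "(\<Sum>a<d. W (d - 1) a * p a) = 1 / real d"
  shows "W (d - 1) 0 = 1 / real d"
proof (rule convex_comb_eq_bound_imp_eq[where x = "\<lambda>a. W (d - 1) a"])
  show "prob_vector d p" using p by (simp add: passive_prob_vector_def)
  show "\<forall>a<d. W (d - 1) a \<le> 1 / real d"
  proof (intro allI impI)
    fix a assume "a < d"
    with columns have "real d * W (d - 1) a \<le> 1"
      using passive_prob_vector_last_le[of d "\<lambda>j. W j a"] by simp
    then show "W (d - 1) a \<le> 1 / real d" using \<open>0 < d\<close> by (simp add: field_simps)
  qed
  show "(\<Sum>a<d. p a * W (d - 1) a) = 1 / real d" using uniform by (simp add: mult.commute)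
qed (use \<open>0 < d\<close> passive_prob_vector_first_pos[OF \<open>0 < d\<close> p] in auto)

lemma passive_columns_not_onto:
  fixes W :: "nat \<Rightarrow> nat \<Rightarrow> real"
  assumes "2 \<le> d" and columns: "\<forall>a<d. passive_prob_vector d (\<lambda>j. W j a)"
  shows "\<exists>r. passive_prob_vector d r \<and>
    (\<forall>p. passive_prob_vector d p \<longrightarrow> (\<exists>j<d. (\<Sum>a<d. W j a * p a) \<noteq> r j))"
proof (rule ccontr)
  assume "\<not> ?thesis"
  then have onto: "\<exists>p. passive_prob_vector d p \<and> (\<forall>j<d. (\<Sum>a<d. W j a * p a) = r j)"
    if "passive_prob_vector d r" for r
    using that by blast
  have d: "0 < d" "0 < d - 1" using assms(1) by auto
  obtain p where "passive_prob_vector d p" and "(\<Sum>a<d. W 0 a * p a) = 1"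
    using onto[of "\<lambda>i. if i = 0 then 1 else 0"] d
    by (force simp: passive_prob_vector_def prob_vector_def)
  then have "W (d - 1) 0 = 0" using passive_columns_ground_state_preimage assms by blast
  moreover obtain p' where "passive_prob_vector d p'" and "(\<Sum>a<d. W (d - 1) a * p' a) = 1 / real d"
    using onto[of "\<lambda>i. 1 / real d"] d by (force simp: passive_prob_vector_def prob_vector_def)
  then have "W (d - 1) 0 = 1 / real d" using passive_columns_uniform_preimage d(1) columns by blast
  ultimately show False using d(1) by simp
qed

lemma mat_diag_mult_vec:
  assumes "v \<in> carrier_vec d"
  shows "mat_diag d f *\<^sub>v v = vec d (\<lambda>i. f i * v $ i)"
proof (rule eq_vecI)
  fix i assume "i < dim_vec (vec d (\<lambda>i. f i * v $ i))"
  then have i: "i < d" by simp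
  have "(mat_diag d f *\<^sub>v v) $ i = (\<Sum>k\<in>{0..<d}. (if i = k then f k else 0) * v $ k)"
    using i assms by (simp add: mat_diag_def scalar_prod_def row_def)
  also have "\<dots> = (\<Sum>k\<in>{0..<d}. if k = i then f i * v $ i else 0)" by (rule sum.cong) auto
  also have "\<dots> = f i * v $ i" using i by simp
  finally show "(mat_diag d f *\<^sub>v v) $ i = vec d (\<lambda>i. f i * v $ i) $ i" using i by simp
qed (use assms in \<open>simp add: mat_diag_def\<close>)

lemma of_real_cmod_power2: "(complex_of_real (cmod z))\<^sup>2 = z * cnj z"
  by (metis complex_norm_square of_real_power)

lemma mat_diag_quadratic_form:
  assumes "v \<in> carrier_vec d"
  shows "conjugate v \<bullet> (mat_diag d f *\<^sub>v v) = (\<Sum>i<d. f i * of_real ((cmod (v $ i))\<^sup>2))"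
  using assms
  by (simp add: mat_diag_mult_vec scalar_prod_def lessThan_atLeast0 of_real_cmod_power2 mult_ac)

lemma mtrace_mat_diag: "mtrace (mat_diag d f) = (\<Sum>i<d. f i)"
  by (simp add: mtrace_def mat_diag_def)

lemma mat_diag_eq_iff: "mat_diag d f = mat_diag d g \<longleftrightarrow> (\<forall>i<d. f i = g i)"
proof
  assume eq: "mat_diag d f = mat_diag d g"
  show "\<forall>i<d. f i = g i"
  proof (intro allI impI)
    fix i assume "i < d"
    moreover have "mat_diag d f $$ (i, i) = mat_diag d g $$ (i, i)" using eq by simp
    ultimately show "f i = g i" by (simp add: mat_diag_def)
  qed
qed (auto simp: mat_diag_def intro!: eq_matI)

lemma psd_mat_diag_iff:
  "psd d (mat_diag d (\<lambda>i. complex_of_real (p i))) \<longleftrightarrow> (\<forall>i<d. 0 \<le> p i)"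
proof
  assume psd: "psd d (mat_diag d (\<lambda>i. complex_of_real (p i)))"
  show "\<forall>i<d. 0 \<le> p i"
  proof (intro allI impI)
    fix i assume "i < d"
    have "conjugate (unit_vec d i) \<bullet> (mat_diag d (\<lambda>i. complex_of_real (p i)) *\<^sub>v unit_vec d i)
        = (\<Sum>k<d. complex_of_real (p k) * complex_of_real ((cmod (unit_vec d i $ k))\<^sup>2))"
      by (simp only: mat_diag_quadratic_form unit_vec_carrier)
    also have "\<dots> = (\<Sum>k<d. if k = i then complex_of_real (p k) else 0)"
      by (intro sum.cong refl) (simp add: unit_vec_def)
    also have "\<dots> = complex_of_real (p i)" using \<open>i < d\<close> by simp
    finally show "0 \<le> p i" using psd unfolding psd_def by (metis Re_complex_of_real unit_vec_carrier)
  qed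
next
  assume nonneg: "\<forall>i<d. 0 \<le> p i"
  show "psd d (mat_diag d (\<lambda>i. complex_of_real (p i)))"
    unfolding psd_def
  proof (intro conjI ballI)
    fix v :: "complex vec" assume "v \<in> carrier_vec d"
    then have form: "conjugate v \<bullet> (mat_diag d (\<lambda>i. complex_of_real (p i)) *\<^sub>v v)
        = complex_of_real (\<Sum>i<d. p i * (cmod (v $ i))\<^sup>2)"
      by (simp add: mat_diag_quadratic_form)
    show "Im (conjugate v \<bullet> (mat_diag d (\<lambda>i. complex_of_real (p i)) *\<^sub>v v)) = 0"
      unfolding form by simp
    show "Re (conjugate v \<bullet> (mat_diag d (\<lambda>i. complex_of_real (p i)) *\<^sub>v v)) \<ge> 0"
      unfolding form using nonneg by (auto intro!: sum_nonneg)
  qed simp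
qed

lemma mat_diag_in_states_iff:
  "mat_diag d (\<lambda>i. complex_of_real (p i)) \<in> states d \<longleftrightarrow> prob_vector d p"
proof -
  have "mtrace (mat_diag d (\<lambda>i. complex_of_real (p i))) = 1 \<longleftrightarrow> (\<Sum>i<d. p i) = 1"
    by (simp add: mtrace_mat_diag flip: of_real_sum)
  then show ?thesis by (simp add: states_def prob_vector_def psd_mat_diag_iff)
qed

lemma passive_states_iff:
  "\<rho> \<in> passive_states d \<longleftrightarrow>
    (\<exists>p. passive_prob_vector d p \<and> \<rho> = mat_diag d (\<lambda>i. complex_of_real (p i)))"
  by (auto simp: passive_states_def passive_prob_vector_def mat_diag_in_states_iff)

lemma mat_diag_in_passive_states_iff:
  "mat_diag d (\<lambda>i. complex_of_real (p i)) \<in> passive_states d \<longleftrightarrow> passive_prob_vector d p"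
proof
  assume "mat_diag d (\<lambda>i. complex_of_real (p i)) \<in> passive_states d"
  then obtain q where "passive_prob_vector d q" and "\<forall>i<d. p i = q i"
    by (auto simp: passive_states_iff mat_diag_eq_iff)
  then show "passive_prob_vector d p" using passive_prob_vector_cong by blast
qed (auto simp: passive_states_iff)

definition kraus_transition :: "complex mat list \<Rightarrow> nat \<Rightarrow> nat \<Rightarrow> real" where
  "kraus_transition Ks j a = (\<Sum>K\<leftarrow>Ks. (cmod (K $$ (j, a)))\<^sup>2)"

lemma mat_adjoint_carrier: "K \<in> carrier_mat d d \<Longrightarrow> mat_adjoint K \<in> carrier_mat d d"
  unfolding mat_adjoint_def by auto

lemma mat_adjoint_index:
  "K \<in> carrier_mat d d \<Longrightarrow> i < d \<Longrightarrow> j < d \<Longrightarrow> mat_adjoint K $$ (i, j) = cnj (K $$ (j, i))"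
  unfolding mat_adjoint_def by (auto simp: mat_of_rows_def)

lemma msum_carrier_mat: "\<forall>M\<in>set Ms. M \<in> carrier_mat d d \<Longrightarrow> msum d Ms \<in> carrier_mat d d"
  by (induction Ms) (auto simp: msum_def)

lemma conj_mat_diag_index:
  assumes K: "K \<in> carrier_mat d d" and "j < d"
  shows "(K * mat_diag d c * mat_adjoint K) $$ (j, j) = (\<Sum>a<d. c a * of_real ((cmod (K $$ (j, a)))\<^sup>2))"
proof -
  have "(K * mat_diag d c * mat_adjoint K) $$ (j, j) = (\<Sum>a<d. K $$ (j, a) * c a * cnj (K $$ (j, a)))"
    using assms mat_adjoint_carrier[OF K] mat_adjoint_index[OF K]
    by (auto simp: mat_diag_mult_right[OF K] scalar_prod_def lessThan_atLeast0 intro!: sum.cong)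
  also have "\<dots> = (\<Sum>a<d. c a * of_real ((cmod (K $$ (j, a)))\<^sup>2))"
    by (simp add: of_real_cmod_power2 mult_ac)
  finally show ?thesis .
qed

lemma kraus_map_mat_diag_index:
  assumes "\<forall>K\<in>set Ks. K \<in> carrier_mat d d" and "j < d"
  shows "msum d (map (\<lambda>K. K * mat_diag d c * mat_adjoint K) Ks) $$ (j, j)
    = (\<Sum>a<d. c a * of_real (kraus_transition Ks j a))"
  using assms
proof (induction Ks)
  case Nil
  then show ?case by (simp add: msum_def kraus_transition_def)
next
  case (Cons K Ks)
  have K: "K \<in> carrier_mat d d" using Cons.prems by simp
  have "msum d (map (\<lambda>K. K * mat_diag d c * mat_adjoint K) Ks) \<in> carrier_mat d d"
    using Cons.prems by (auto intro!: msum_carrier_mat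
        mult_carrier_mat[OF mult_carrier_mat[OF _ mat_diag_dim] mat_adjoint_carrier])
  then have "msum d (map (\<lambda>K. K * mat_diag d c * mat_adjoint K) (K # Ks)) $$ (j, j)
      = (K * mat_diag d c * mat_adjoint K) $$ (j, j)
        + msum d (map (\<lambda>K. K * mat_diag d c * mat_adjoint K) Ks) $$ (j, j)"
    using Cons.prems by (simp add: msum_def)
  also have "\<dots> = (\<Sum>a<d. c a * of_real ((cmod (K $$ (j, a)))\<^sup>2))
        + (\<Sum>a<d. c a * of_real (kraus_transition Ks j a))"
    using Cons K by (simp add: conj_mat_diag_index)
  also have "\<dots> = (\<Sum>a<d. c a * of_real (kraus_transition (K # Ks) j a))"
    by (simp add: kraus_transition_def algebra_simps sum.distrib)
  finally show ?case .
qed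

text \<open>Only the diagonal of the output is computed from the Kraus operators: the output is passive,
  hence diagonal, by assumption.\<close>

lemma passive_kraus_map_mat_diag:
  assumes outputs_passive: "\<forall>\<rho>\<in>states d. \<Phi> \<rho> \<in> passive_states d"
    and Ks: "\<forall>K\<in>set Ks. K \<in> carrier_mat d d"
    and kraus: "\<forall>\<rho>\<in>carrier_mat d d. \<Phi> \<rho> = msum d (map (\<lambda>K. K * \<rho> * mat_adjoint K) Ks)"
    and p: "prob_vector d p"
  shows "\<Phi> (mat_diag d (\<lambda>i. complex_of_real (p i)))
    = mat_diag d (\<lambda>j. complex_of_real (\<Sum>a<d. kraus_transition Ks j a * p a))"
proof -
  obtain q where q: "\<Phi> (mat_diag d (\<lambda>i. complex_of_real (p i))) = mat_diag d (\<lambda>i. complex_of_real (q i))"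
    using outputs_passive p mat_diag_in_states_iff passive_states_iff by metis
  have "q j = (\<Sum>a<d. kraus_transition Ks j a * p a)" if "j < d" for j
  proof -
    have "complex_of_real (q j) = \<Phi> (mat_diag d (\<lambda>i. complex_of_real (p i))) $$ (j, j)"
      using q that by (simp add: mat_diag_def)
    also have "\<dots> = (\<Sum>a<d. complex_of_real (p a) * complex_of_real (kraus_transition Ks j a))"
      using kraus Ks that by (simp add: kraus_map_mat_diag_index)
    finally show ?thesis by (simp add: mult.commute flip: of_real_mult of_real_sum)
  qed
  then show ?thesis using q by (simp add: mat_diag_eq_iff)
qed

lemma activity_breaking_diagonal_action:
  assumes "activity_breaking d \<Phi>"
  obtains W :: "nat \<Rightarrow> nat \<Rightarrow> real"
  where "\<forall>a<d. passive_prob_vector d (\<lambda>j. W j a)"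
    and "\<And>p. prob_vector d p \<Longrightarrow>
      \<Phi> (mat_diag d (\<lambda>i. complex_of_real (p i))) = mat_diag d (\<lambda>j. complex_of_real (\<Sum>a<d. W j a * p a))"
proof -
  have outputs_passive: "\<forall>\<rho>\<in>states d. \<Phi> \<rho> \<in> passive_states d"
    using assms unfolding activity_breaking_def by blast
  obtain Ks where "\<forall>K\<in>set Ks. K \<in> carrier_mat d d"
    and "\<forall>\<rho>\<in>carrier_mat d d. \<Phi> \<rho> = msum d (map (\<lambda>K. K * \<rho> * mat_adjoint K) Ks)"
    using assms unfolding activity_breaking_def quantum_channel_def by blast
  with outputs_passive have action: "\<Phi> (mat_diag d (\<lambda>i. complex_of_real (p i)))
      = mat_diag d (\<lambda>j. complex_of_real (\<Sum>a<d. kraus_transition Ks j a * p a))"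
    if "prob_vector d p" for p
    using passive_kraus_map_mat_diag that by blast
  have "passive_prob_vector d (\<lambda>j. kraus_transition Ks j a)" if "a < d" for a
  proof -
    define e where "e i = (if i = a then 1 else 0 :: real)" for i
    have e: "prob_vector d e" using that by (simp add: prob_vector_def e_def)
    have "(\<Sum>b<d. kraus_transition Ks j b * e b) = kraus_transition Ks j a" for j
      using that by (simp add: e_def if_distrib cong: if_cong)
    then have "\<Phi> (mat_diag d (\<lambda>i. complex_of_real (e i)))
        = mat_diag d (\<lambda>j. complex_of_real (kraus_transition Ks j a))"
      using action[OF e] by simp
    then show ?thesis
      using outputs_passive e by (metis mat_diag_in_states_iff mat_diag_in_passive_states_iff)
  qed
  with action show ?thesis using that by blast
qed

lemma activity_breaking_not_onto_passive_states:
  assumes "2 \<le> d" and "activity_breaking d \<Phi>"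
  shows "\<exists>\<tau>\<in>passive_states d. \<tau> \<notin> \<Phi> ` passive_states d"
proof -
  obtain W where columns: "\<forall>a<d. passive_prob_vector d (\<lambda>j. W j a)"
    and action: "\<And>p. prob_vector d p \<Longrightarrow>
      \<Phi> (mat_diag d (\<lambda>i. complex_of_real (p i))) = mat_diag d (\<lambda>j. complex_of_real (\<Sum>a<d. W j a * p a))"
    using activity_breaking_diagonal_action[OF assms(2)] by blast
  obtain r where r: "passive_prob_vector d r"
    and unreached: "\<forall>p. passive_prob_vector d p \<longrightarrow> (\<exists>j<d. (\<Sum>a<d. W j a * p a) \<noteq> r j)"
    using passive_columns_not_onto[OF assms(1) columns] by blast
  have "mat_diag d (\<lambda>i. complex_of_real (r i)) \<notin> \<Phi> ` passive_states d"
  proof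
    assume "mat_diag d (\<lambda>i. complex_of_real (r i)) \<in> \<Phi> ` passive_states d"
    then obtain p where p: "passive_prob_vector d p"
      and "mat_diag d (\<lambda>i. complex_of_real (r i)) = \<Phi> (mat_diag d (\<lambda>i. complex_of_real (p i)))"
      by (auto simp: passive_states_iff)
    then have "mat_diag d (\<lambda>i. complex_of_real (r i))
        = mat_diag d (\<lambda>j. complex_of_real (\<Sum>a<d. W j a * p a))"
      using action passive_prob_vector_def by metis
    then have "\<forall>j<d. r j = (\<Sum>a<d. W j a * p a)"
      unfolding mat_diag_eq_iff of_real_eq_iff .
    then show False using unreached p by fastforce
  qed
  moreover have "mat_diag d (\<lambda>i. complex_of_real (r i)) \<in> passive_states d"
    using r by (simp add: mat_diag_in_passive_states_iff)
  ultimately show ?thesis by blast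
qed

theorem mainTheorem17:
  fixes d :: nat and \<Phi> :: "complex mat \<Rightarrow> complex mat"
  assumes "d \<ge> 2" and "activity_breaking d \<Phi>"
  shows "\<Phi> ` passive_states d \<subset> passive_states d \<and> \<not> (\<forall>\<tau> \<in> passive_states d. \<Phi> \<tau> = \<tau>)"
proof -
  have "\<Phi> ` passive_states d \<subseteq> passive_states d"
    using assms(2) unfolding activity_breaking_def passive_states_def by blast
  moreover obtain \<tau> where "\<tau> \<in> passive_states d" and "\<tau> \<notin> \<Phi> ` passive_states d"
    using activity_breaking_not_onto_passive_states[OF assms] by blast
  ultimately show ?thesis by (metis image_eqI psubsetI)
qed

end
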